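(* Let $L^x,L^y>0$, let $i\neq j$ be two boxes, each box $k\in\{i,j\}$ having center $(c^x_k,c^y_k)$, side lengths $(\ell^x_k,\ell^y_k)$ and given constants $lb^s_k>0$. Let $$Q^{lb}=\{(c_i,c_j,\ell_i,\ell_j)\in\mathbb{R}^8:\ \tfrac12\ell^s_k\le c^s_k\le L^s-\tfrac12\ell^s_k,\ \ell^s_k\ge lb^s_k\ \ \forall s\in\{x,y\},k\in\{i,j\}\}.$$ Let $E$ be the set of $(c_i,c_j,\ell_i,\ell_j,w)\in\mathbb{R}^8\times\{0,1\}^2$ with $(c_i,c_j,\ell_i,\ell_j)\in Q^{lb}$ and such that: $w=(0,0)$ implies $\mathscr{B}_i\leftarrow_y\mathscr{B}_j$; $w=(1,0)$ implies $\mathscr{B}_i\leftarrow_x\mathscr{B}_j$; $w=(1,1)$ implies $\mathscr{B}_j\leftarrow_y\mathscr{B}_i$; $w=(0,1)$ implies $\mathscr{B}_j\leftarrow_x\mathscr{B}_i$. Then $E$ equals the set of $(c_i,c_j,\ell_i,\ell_j,w)$ satisfying \begin{align*} &\tfrac12\ell^s_p\le c^s_p\le L^s-\tfrac12\ell^s_p,\quad \ell^s_p\ge lb^s_p\qquad\forall s\in\{x,y\},p\in\{i,j\},\\ &c^y_i+\tfrac12\ell^y_i\le c^y_j-\tfrac12\ell^y_j+L^y(w_1+w_2),\\ &c^x_i+\tfrac12\ell^x_i\le c^x_j-\tfrac12\ell^x_j+L^x(1-w_1+w_2),\\ &c^y_j+\tfrac12\ell^y_j\le c^y_i-\tfrac12\ell^y_i+L^y(2-w_1-w_2),\\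 &c^x_j+\tfrac12\ell^x_j\le c^x_i-\tfrac12\ell^x_i+L^x(1+w_1-w_2),\\ &w\in\{0,1\}^2. \end{align*}
   Context: Box $\mathscr{B}_p$ precedes box $\mathscr{B}_q$ in direction $s\in\{x,y\}$, written $\mathscr{B}_p\leftarrow_s\mathscr{B}_q$, if $c^s_p+\tfrac12\ell^s_p\le c^s_q-\tfrac12\ell^s_q$. $E$ is the embedding $\operatorname{Em}(Q^{lb},D^4,GB^4)$ of the four-branch non-overlap disjunction with the two-bit Gray encoding. *)

theory Defs
  imports Complex_Main
begin

(* A point of R^8 is (c_i, c_j, l_i, l_j), each component a pair (x-coordinate, y-coordinate). *)
type_synonym pt2 = "real \<times> real"
type_synonym cfg = "pt2 \<times> pt2 \<times> pt2 \<times> pt2"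

datatype dir = DX | DY

fun coord :: "dir \<Rightarrow> pt2 \<Rightarrow> real" where
  "coord DX v = fst v"
| "coord DY v = snd v"

definition precedes :: "dir \<Rightarrow> pt2 \<Rightarrow> pt2 \<Rightarrow> pt2 \<Rightarrow> pt2 \<Rightarrow> bool" where
  "precedes s cp lp cq lq \<longleftrightarrow> coord s cp + coord s lp / 2 \<le> coord s cq - coord s lq / 2"

definition Qlb :: "pt2 \<Rightarrow> pt2 \<Rightarrow> pt2 \<Rightarrow> cfg set" where
  "Qlb L lbi lbj = {(ci, cj, li, lj). \<forall>s \<in> {DX, DY}.
      coord s li / 2 \<le> coord s ci \<and> coord s ci \<le> coord s L - coord s li / 2 \<and> coord s li \<ge> coord s lbi \<and>
      coord s lj / 2 \<le> coord s cj \<and> coord s cj \<le> coord s L - coord s lj / 2 \<and> coord s lj \<ge> coord s lbj}"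

definition bin2 :: "pt2 set" where
  "bin2 = {0, 1} \<times> {0, 1}"

definition Eset :: "pt2 \<Rightarrow> pt2 \<Rightarrow> pt2 \<Rightarrow> (cfg \<times> pt2) set" where
  "Eset L lbi lbj = {((ci, cj, li, lj), w). (ci, cj, li, lj) \<in> Qlb L lbi lbj \<and> w \<in> bin2 \<and>
      (w = (0, 0) \<longrightarrow> precedes DY ci li cj lj) \<and>
      (w = (1, 0) \<longrightarrow> precedes DX ci li cj lj) \<and>
      (w = (1, 1) \<longrightarrow> precedes DY cj lj ci li) \<and>
      (w = (0, 1) \<longrightarrow> precedes DX cj lj ci li)}"

end

theory Submission
  imports Defs
begin

text \<open>Inside the strip \<open>[0, L\<^sup>s]\<close> every box satisfies \<open>c + l/2 \<le> L\<^sup>s\<close> and \<open>c - l/2 \<ge> 0\<close>,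
  so a precedence constraint relaxed by \<open>L\<^sup>s\<close> (or \<open>2 L\<^sup>s\<close>) holds for any pair of boxes.
  The Gray-coded coefficients \<open>w1 + w2\<close>, \<open>1 - w1 + w2\<close>, \<open>2 - w1 - w2\<close>, \<open>1 + w1 - w2\<close> each
  vanish at exactly one point of \<open>{0,1}\<^sup>2\<close>, a different one for each constraint, and are
  \<open>\<ge> 1\<close> at the other three; hence at a binary point the big-M system is equivalent to the
  precedence of the branch selected by that point.\<close>

definition gray_bigM :: "pt2 \<Rightarrow> cfg \<Rightarrow> pt2 \<Rightarrow> bool" where
  "gray_bigM L q w \<longleftrightarrow> (case (q, w) of ((ci, cj, li, lj), (w1, w2)) \<Rightarrow>
       snd ci + snd li / 2 \<le> snd cj - snd lj / 2 + snd L * (w1 + w2) \<and>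
       fst ci + fst li / 2 \<le> fst cj - fst lj / 2 + fst L * (1 - w1 + w2) \<and>
       snd cj + snd lj / 2 \<le> snd ci - snd li / 2 + snd L * (2 - w1 - w2) \<and>
       fst cj + fst lj / 2 \<le> fst ci - fst li / 2 + fst L * (1 + w1 - w2))"

lemma bin2_cases [consumes 1]:
  assumes "w \<in> bin2"
  obtains "w = (0, 0)" | "w = (1, 0)" | "w = (1, 1)" | "w = (0, 1)"
  using assms unfolding bin2_def by auto

lemma Qlb_in_strip:
  assumes "(ci, cj, li, lj) \<in> Qlb L lbi lbj"
  shows "coord s ci + coord s li / 2 \<le> coord s L" "0 \<le> coord s ci - coord s li / 2"
    and "coord s cj + coord s lj / 2 \<le> coord s L" "0 \<le> coord s cj - coord s lj / 2"
  using assms by (cases s; auto simp: Qlb_def)+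

lemma gray_bigM_iff_branch:
  assumes Q: "(ci, cj, li, lj) \<in> Qlb L lbi lbj" and L: "fst L > 0" "snd L > 0"
  shows "gray_bigM L (ci, cj, li, lj) (0, 0) \<longleftrightarrow> precedes DY ci li cj lj"
    and "gray_bigM L (ci, cj, li, lj) (1, 0) \<longleftrightarrow> precedes DX ci li cj lj"
    and "gray_bigM L (ci, cj, li, lj) (1, 1) \<longleftrightarrow> precedes DY cj lj ci li"
    and "gray_bigM L (ci, cj, li, lj) (0, 1) \<longleftrightarrow> precedes DX cj lj ci li"
  using Qlb_in_strip[OF Q, of DX] Qlb_in_strip[OF Q, of DY] L
  by (auto simp: gray_bigM_def precedes_def)

lemma mem_Eset_iff_gray_bigM:
  assumes "fst L > 0" "snd L > 0"
  shows "((ci, cj, li, lj), w) \<in> Eset L lbi lbj \<longleftrightarrow>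
    (ci, cj, li, lj) \<in> Qlb L lbi lbj \<and> gray_bigM L (ci, cj, li, lj) w \<and> w \<in> bin2"
proof (cases "(ci, cj, li, lj) \<in> Qlb L lbi lbj \<and> w \<in> bin2")
  case True
  then have "w \<in> bin2" by blast
  then show ?thesis
    using True gray_bigM_iff_branch[of ci cj li lj L lbi lbj] assms
    by (cases rule: bin2_cases) (auto simp: Eset_def)
qed (auto simp: Eset_def)

theorem proposition5p2:
  fixes L lbi lbj :: "real \<times> real"
  assumes "fst L > 0" and "snd L > 0"
    and "fst lbi > 0" and "snd lbi > 0" and "fst lbj > 0" and "snd lbj > 0"
  shows "Eset L lbi lbj =
    {((ci, cj, li, lj), (w1, w2)).
       (\<forall>s \<in> {DX, DY}.
          coord s li / 2 \<le> coord s ci \<and> coord s ci \<le> coord s L - coord s li / 2 \<and> coord s li \<ge> coord s lbi \<and>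
          coord s lj / 2 \<le> coord s cj \<and> coord s cj \<le> coord s L - coord s lj / 2 \<and> coord s lj \<ge> coord s lbj) \<and>
       snd ci + snd li / 2 \<le> snd cj - snd lj / 2 + snd L * (w1 + w2) \<and>
       fst ci + fst li / 2 \<le> fst cj - fst lj / 2 + fst L * (1 - w1 + w2) \<and>
       snd cj + snd lj / 2 \<le> snd ci - snd li / 2 + snd L * (2 - w1 - w2) \<and>
       fst cj + fst lj / 2 \<le> fst ci - fst li / 2 + fst L * (1 + w1 - w2) \<and>
       (w1, w2) \<in> bin2}" (is "_ = ?bigM_set")
proof (rule set_eqI)
  fix z :: "cfg \<times> pt2"
  obtain ci cj li lj w1 w2 where "z = ((ci, cj, li, lj), (w1, w2))"
    by (metis prod.exhaust)
  then show "z \<in> Eset L lbi lbj \<longleftrightarrow> z \<in> ?bigM_set"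
    by (simp add: mem_Eset_iff_gray_bigM[OF assms(1,2)] Qlb_def gray_bigM_def)
qed

end
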